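(* Let $q>0$ and let $(p_n)_{n\ge1}$ be the $q$-Mallows process. Then for every $n\ge1$, $p_n$ is distributed according to the Mallows measure $\mu_{n,1/q}$.
   Context: For $q>0$ and $n\ge1$, $\mu_{n,q}(\pi)=q^{\mathrm{inv}(\pi)}/Z_{n,q}$ on $S_n$, with $\mathrm{inv}(\pi)$ the number of pairs $i<j$ with $\pi(i)>\pi(j)$ and $Z_{n,q}$ a normalizing constant. The $q$-Mallows process is the sequence of random permutations $p_n\in S_n$ defined as follows: let $(p_n(n))_{n\ge1}$ be independent random variables with $\mathbb{P}(p_n(n)=j)=\frac{q^{j-1}}{1+q+\dots+q^{n-1}}$ for $1\le j\le n$; set $p_1$ to be the unique permutation of $\{1\}$, and for $n\ge2$ define $p_n$ by the given value $p_n(n)$ and, for $1\le i\le n-1$, $p_n(i)=p_{n-1}(i)$ if $p_{n-1}(i)<p_n(n)$ and $p_n(i)=p_{n-1}(i)+1$ if $p_{n-1}(i)\ge p_n(n)$. *)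

theory Defs
  imports "HOL-Probability.Probability" "HOL-Combinatorics.Permutations"
begin

text \<open>Permutations of {1..n} are functions nat => nat that permute {1..n}
  (and are the identity outside).\<close>

definition inv_count :: "nat \<Rightarrow> (nat \<Rightarrow> nat) \<Rightarrow> nat" where
  "inv_count n \<pi> = card {(i, j). 1 \<le> i \<and> i < j \<and> j \<le> n \<and> \<pi> i > \<pi> j}"

definition mallows_Z :: "nat \<Rightarrow> real \<Rightarrow> real" where
  "mallows_Z n q = (\<Sum>\<pi>\<in>{\<pi>. \<pi> permutes {1..n}}. q ^ inv_count n \<pi>)"

definition mallows_prob :: "nat \<Rightarrow> real \<Rightarrow> (nat \<Rightarrow> nat) \<Rightarrow> real" where
  "mallows_prob n q \<pi> =
     (if \<pi> permutes {1..n} then q ^ inv_count n \<pi> / mallows_Z n q else 0)"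

text \<open>The q-Mallows process as a deterministic function of the sequence v of
  values v n = p_n(n).\<close>
fun mallows_proc :: "(nat \<Rightarrow> nat) \<Rightarrow> nat \<Rightarrow> (nat \<Rightarrow> nat)" where
  "mallows_proc v 0 = id"
| "mallows_proc v (Suc 0) = id"
| "mallows_proc v (Suc (Suc n)) =
     (\<lambda>i. if i = Suc (Suc n) then v (Suc (Suc n))
          else if 1 \<le> i \<and> i \<le> Suc n then
            (if mallows_proc v (Suc n) i < v (Suc (Suc n)) then mallows_proc v (Suc n) i
             else mallows_proc v (Suc n) i + 1)
          else i)"

end

theory Submission
  imports Defs
begin

text \<open>
  Write a permutation \<pi> of {1..n} through its prefix ranks: the k-th prefix rank is the
  position of \<pi>(k) among \<pi>(1), ..., \<pi>(k). Inserting p_n(n) into p_{n-1} does not change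
  the relative order of the earlier values, so p_n = \<pi> holds exactly when p_k(k) equals the
  k-th prefix rank of \<pi> for every k \<le> n. By independence this event has probability
  \<Prod>_k q^(rank_k - 1) / [k]_q. Since the k-th prefix rank is k minus the number of inversions
  (i, k) with i < k, the exponents add up to \<Sum>_k (k - 1) - inv(\<pi>), so the probability is
  proportional to q^(-inv(\<pi>)); the constant is forced by total mass 1, because p_n is almost
  surely a permutation.
\<close>

lemma mallows_proc_Suc:
  assumes "n \<ge> 1"
  shows "mallows_proc v (Suc n) = (\<lambda>i. if i = Suc n then v (Suc n)
          else if 1 \<le> i \<and> i \<le> n then
            (if mallows_proc v n i < v (Suc n) then mallows_proc v n i
             else mallows_proc v n i + 1)
          else i)"
  using assms by (cases n) auto

lemma mallows_proc_outside: "i = 0 \<or> n < i \<Longrightarrow> mallows_proc v n i = i"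
  by (induction v n rule: mallows_proc.induct) auto

lemma mallows_proc_permutes:
  assumes "n \<ge> 1" and "\<forall>k\<in>{2..n}. v k \<in> {1..k}"
  shows "mallows_proc v n permutes {1..n}"
  using assms
proof (induction n rule: nat_induct_at_least)
  case base
  then show ?case by (simp add: id_def)
next
  case (Suc n)
  let ?f = "mallows_proc v (Suc n)" and ?\<sigma> = "mallows_proc v n" and ?j = "v (Suc n)"
  have \<sigma>: "?\<sigma> permutes {1..n}" using Suc by auto
  have j: "?j \<in> {1..Suc n}" using Suc.prems Suc.hyps by auto
  have f_last: "?f (Suc n) = ?j" by (simp add: mallows_proc_Suc[OF Suc.hyps])
  have f_prefix: "?f i = (if ?\<sigma> i < ?j then ?\<sigma> i else ?\<sigma> i + 1)" if "i \<in> {1..n}" for i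
    using that by (simp add: mallows_proc_Suc[OF Suc.hyps])
  have f_ne_last: "?f i \<noteq> ?j" if "i \<in> {1..n}" for i
    using f_prefix[OF that] by simp
  have f_inj_prefix: "a = b" if "a \<in> {1..n}" "b \<in> {1..n}" "?f a = ?f b" for a b
  proof -
    have "?\<sigma> a = ?\<sigma> b" using that f_prefix[of a] f_prefix[of b] by (simp split: if_splits)
    then show ?thesis using permutes_inj[OF \<sigma>] by (simp add: inj_eq)
  qed
  show ?case
  proof (rule inj_imp_permutes)
    show "inj_on ?f {1..Suc n}"
    proof (rule inj_onI)
      fix a b assume "a \<in> {1..Suc n}" "b \<in> {1..Suc n}" "?f a = ?f b"
      then show "a = b"
        using f_inj_prefix[of a b] f_ne_last[of a] f_ne_last[of b] f_last
        by (cases "a = Suc n"; cases "b = Suc n") auto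
    qed
    show "?f i \<in> {1..Suc n}" if "i \<in> {1..Suc n}" for i
    proof (cases "i = Suc n")
      case False
      then have "i \<in> {1..n}" using that by auto
      then show ?thesis using f_prefix[of i] permutes_in_image[OF \<sigma>, of i] by auto
    qed (use j f_last in simp)
  qed (auto simp: mallows_proc_Suc[OF Suc.hyps])
qed

text \<open>Undoes one insertion step of the process: forget \<pi>(n+1) and close the gap it leaves
  among the values.\<close>
definition prefix_std :: "nat \<Rightarrow> (nat \<Rightarrow> nat) \<Rightarrow> nat \<Rightarrow> nat" where
  "prefix_std n \<pi> = (\<lambda>i. if 1 \<le> i \<and> i \<le> n then
                          (if \<pi> i < \<pi> (Suc n) then \<pi> i else \<pi> i - 1) else i)"

definition prefix_rank :: "(nat \<Rightarrow> nat) \<Rightarrow> nat \<Rightarrow> nat" where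
  "prefix_rank \<pi> k = card {i\<in>{1..k}. \<pi> i \<le> \<pi> k}"

lemma permutes_last_neq:
  assumes "\<pi> permutes {1..Suc n}" and "i \<in> {1..n}"
  shows "\<pi> i \<noteq> \<pi> (Suc n)"
  using assms permutes_inj[OF assms(1)] by (auto simp: inj_eq)

lemma prefix_std_le_iff:
  assumes "\<pi> permutes {1..Suc n}" and "i \<in> {1..n}" and "i' \<in> {1..n}"
  shows "prefix_std n \<pi> i \<le> prefix_std n \<pi> i' \<longleftrightarrow> \<pi> i \<le> \<pi> i'"
  using assms permutes_last_neq[OF assms(1,2)] permutes_last_neq[OF assms(1,3)]
  by (auto simp: prefix_std_def)

lemma prefix_std_permutes:
  assumes p: "\<pi> permutes {1..Suc n}"
  shows "prefix_std n \<pi> permutes {1..n}"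
proof (rule inj_imp_permutes)
  show "inj_on (prefix_std n \<pi>) {1..n}"
    using prefix_std_le_iff[OF p] permutes_inj[OF p]
    by (intro inj_onI) (metis inj_eq order_antisym order_refl)
  show "prefix_std n \<pi> i \<in> {1..n}" if "i \<in> {1..n}" for i
    using that permutes_in_image[OF p, of i] permutes_in_image[OF p, of "Suc n"]
      permutes_last_neq[OF p that]
    by (auto simp: prefix_std_def)
qed (auto simp: prefix_std_def)

lemma prefix_rank_prefix_std:
  assumes "\<pi> permutes {1..Suc n}" and "k \<le> n"
  shows "prefix_rank (prefix_std n \<pi>) k = prefix_rank \<pi> k"
proof -
  have "{i\<in>{1..k}. prefix_std n \<pi> i \<le> prefix_std n \<pi> k} = {i\<in>{1..k}. \<pi> i \<le> \<pi> k}"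
    using prefix_std_le_iff[OF assms(1)] assms(2) by auto
  then show ?thesis by (simp add: prefix_rank_def)
qed

lemma prefix_rank_last:
  assumes p: "\<pi> permutes {1..m}" and "m \<ge> 1"
  shows "prefix_rank \<pi> m = \<pi> m"
proof -
  have "\<pi> ` {i\<in>{1..m}. \<pi> i \<le> \<pi> m} = {y\<in>\<pi> ` {1..m}. y \<le> \<pi> m}" by auto
  also have "\<dots> = {1..\<pi> m}"
    using permutes_image[OF p] permutes_in_image[OF p, of m] assms(2) by auto
  finally show ?thesis
    using card_image[OF inj_on_subset[OF permutes_inj_on[OF p]]]
    by (metis (no_types, lifting) card_atLeastAtMost diff_Suc_1 prefix_rank_def subset_UNIV)
qed

lemma prefix_rank_bounds:
  assumes "k \<ge> 1"
  shows "1 \<le> prefix_rank \<pi> k \<and> prefix_rank \<pi> k \<le> k"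
proof -
  have "k \<in> {i\<in>{1..k}. \<pi> i \<le> \<pi> k}" using assms by simp
  then have "card {i\<in>{1..k}. \<pi> i \<le> \<pi> k} > 0" by (subst card_gt_0_iff) auto
  moreover have "card {i\<in>{1..k}. \<pi> i \<le> \<pi> k} \<le> card {1..k}" by (rule card_mono) auto
  ultimately show ?thesis by (simp add: prefix_rank_def)
qed

lemma prefix_rank_plus_left_inversions:
  "prefix_rank \<pi> k + card {i\<in>{1..<k}. \<pi> k < \<pi> i} = k"
proof -
  have "{i\<in>{1..k}. \<pi> i \<le> \<pi> k} \<union> {i\<in>{1..<k}. \<pi> k < \<pi> i} = {1..k}" by auto
  moreover have "card ({i\<in>{1..k}. \<pi> i \<le> \<pi> k} \<union> {i\<in>{1..<k}. \<pi> k < \<pi> i})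
      = card {i\<in>{1..k}. \<pi> i \<le> \<pi> k} + card {i\<in>{1..<k}. \<pi> k < \<pi> i}"
    by (rule card_Un_disjoint) auto
  ultimately show ?thesis by (simp add: prefix_rank_def)
qed

lemma inv_count_eq_sum_left_inversions:
  "inv_count n \<pi> = (\<Sum>k\<in>{1..n}. card {i\<in>{1..<k}. \<pi> k < \<pi> i})"
proof -
  have "{(i, j). 1 \<le> i \<and> i < j \<and> j \<le> n \<and> \<pi> i > \<pi> j}
      = prod.swap ` (SIGMA k:{1..n}. {i\<in>{1..<k}. \<pi> k < \<pi> i})"
    by force
  then have "inv_count n \<pi> = card (SIGMA k:{1..n}. {i\<in>{1..<k}. \<pi> k < \<pi> i})"
    unfolding inv_count_def by (simp add: card_image)
  then show ?thesis by simp
qed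

lemma inv_count_eq_sum_ranks:
  "inv_count n \<pi> = (\<Sum>k\<in>{2..n}. k - prefix_rank \<pi> k)"
proof -
  have "card {i\<in>{1..<k}. \<pi> k < \<pi> i} = k - prefix_rank \<pi> k" for k
    using prefix_rank_plus_left_inversions[of \<pi> k] by linarith
  then have "inv_count n \<pi> = (\<Sum>k\<in>{1..n}. k - prefix_rank \<pi> k)"
    unfolding inv_count_eq_sum_left_inversions by simp
  also have "\<dots> = (\<Sum>k\<in>{2..n}. k - prefix_rank \<pi> k)"
    using prefix_rank_bounds[of 1 \<pi>] by (intro sum.mono_neutral_right) (auto simp: not_less_eq_eq)
  finally show ?thesis .
qed

lemma mallows_proc_Suc_eq_iff:
  assumes n: "n \<ge> 1" and p: "\<pi> permutes {1..Suc n}"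
  shows "mallows_proc v (Suc n) = \<pi> \<longleftrightarrow>
           mallows_proc v n = prefix_std n \<pi> \<and> v (Suc n) = \<pi> (Suc n)"
proof
  assume e: "mallows_proc v (Suc n) = \<pi>"
  have j: "v (Suc n) = \<pi> (Suc n)"
    using fun_cong[OF e, of "Suc n"] by (simp add: mallows_proc_Suc[OF n])
  have "mallows_proc v n i = prefix_std n \<pi> i" for i
  proof (cases "i \<in> {1..n}")
    case True
    then show ?thesis
      using fun_cong[OF e, of i] j permutes_last_neq[OF p True]
      by (auto simp: mallows_proc_Suc[OF n] prefix_std_def split: if_splits)
  qed (auto simp: mallows_proc_outside prefix_std_def)
  with j show "mallows_proc v n = prefix_std n \<pi> \<and> v (Suc n) = \<pi> (Suc n)" by auto
next
  assume "mallows_proc v n = prefix_std n \<pi> \<and> v (Suc n) = \<pi> (Suc n)"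
  then have \<sigma>: "mallows_proc v n = prefix_std n \<pi>" and j: "v (Suc n) = \<pi> (Suc n)" by auto
  have "mallows_proc v (Suc n) i = \<pi> i" for i
  proof (cases "i \<in> {1..n}")
    case True
    then show ?thesis
      using j permutes_last_neq[OF p True]
      by (auto simp: mallows_proc_Suc[OF n] \<sigma> prefix_std_def)
  next
    case False
    then show ?thesis
      using j permutes_not_in[OF p, of i] by (auto simp: mallows_proc_Suc[OF n])
  qed
  then show "mallows_proc v (Suc n) = \<pi>" ..
qed

lemma mallows_proc_eq_iff_ranks:
  assumes "n \<ge> 1" and "\<pi> permutes {1..n}"
  shows "mallows_proc v n = \<pi> \<longleftrightarrow> (\<forall>k\<in>{2..n}. v k = prefix_rank \<pi> k)"
  using assms
proof (induction n arbitrary: \<pi> rule: nat_induct_at_least)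
  case base
  then show ?case using permutes_sing by simp
next
  case (Suc n)
  have "mallows_proc v (Suc n) = \<pi> \<longleftrightarrow>
          (\<forall>k\<in>{2..n}. v k = prefix_rank (prefix_std n \<pi>) k) \<and> v (Suc n) = \<pi> (Suc n)"
    using mallows_proc_Suc_eq_iff[OF Suc.hyps Suc.prems]
      Suc.IH[OF prefix_std_permutes[OF Suc.prems]] by simp
  also have "\<dots> \<longleftrightarrow> (\<forall>k\<in>{2..Suc n}. v k = prefix_rank \<pi> k)"
    using prefix_rank_prefix_std[OF Suc.prems] prefix_rank_last[OF Suc.prems] Suc.hyps
    by (auto simp: atLeastAtMostSuc_conv)
  finally show ?case .
qed

lemma power_pred_eq_mult_inverse_power:
  fixes q :: "'a :: field"
  assumes "q \<noteq> 0" and "1 \<le> r" and "r \<le> k"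
  shows "q ^ (r - 1) = q ^ (k - 1) * (1 / q) ^ (k - r)"
proof -
  have "q ^ (k - 1) = q ^ (r - 1) * q ^ (k - r)"
    using assms(2,3) by (simp flip: power_add)
  then show ?thesis using assms(1) by (simp add: power_one_over field_simps)
qed

lemma prod_power_prefix_rank:
  fixes q :: "'a :: field"
  assumes "q \<noteq> 0"
  shows "(\<Prod>k\<in>{2..n}. q ^ (prefix_rank \<pi> k - 1))
       = (\<Prod>k\<in>{2..n}. q ^ (k - 1)) * (1 / q) ^ inv_count n \<pi>"
proof -
  have "(\<Prod>k\<in>{2..n}. q ^ (prefix_rank \<pi> k - 1))
      = (\<Prod>k\<in>{2..n}. q ^ (k - 1) * (1 / q) ^ (k - prefix_rank \<pi> k))"
    using assms prefix_rank_bounds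
    by (intro prod.cong power_pred_eq_mult_inverse_power) auto
  also have "\<dots> = (\<Prod>k\<in>{2..n}. q ^ (k - 1)) * (\<Prod>k\<in>{2..n}. (1 / q) ^ (k - prefix_rank \<pi> k))"
    by (rule prod.distrib)
  also have "(\<Prod>k\<in>{2..n}. (1 / q) ^ (k - prefix_rank \<pi> k)) = (1 / q) ^ inv_count n \<pi>"
    by (simp only: inv_count_eq_sum_ranks power_sum)
  finally show ?thesis .
qed

lemma (in prob_space) sum_prob_eq_1_AE:
  assumes "finite S" and "AE \<omega> in M. f \<omega> \<in> S"
    and "\<And>s. s \<in> S \<Longrightarrow> {\<omega>\<in>space M. f \<omega> = s} \<in> events"
  shows "(\<Sum>s\<in>S. prob {\<omega>\<in>space M. f \<omega> = s}) = 1"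
proof -
  have "(\<Sum>s\<in>S. prob {\<omega>\<in>space M. f \<omega> = s}) = prob (\<Union>s\<in>S. {\<omega>\<in>space M. f \<omega> = s})"
    using assms(1,3) by (intro finite_measure_finite_Union[symmetric]) (auto simp: disjoint_family_on_def)
  also have "(\<Union>s\<in>S. {\<omega>\<in>space M. f \<omega> = s}) = {\<omega>\<in>space M. f \<omega> \<in> S}" by auto
  also have "prob \<dots> = 1"
    using assms by (subst prob_Collect_eq_1) (auto simp flip: \<open>(\<Union>s\<in>S. _) = _\<close>)
  finally show ?thesis .
qed

locale q_mallows_values = prob_space M for M :: "'a measure" +
  fixes X :: "nat \<Rightarrow> 'a \<Rightarrow> nat" and q :: real
  assumes q_pos: "q > 0"
    and indep: "indep_vars (\<lambda>_. count_space UNIV) X {1..}"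
    and prob_X_eq: "\<And>k j. k \<ge> 1 \<Longrightarrow> 1 \<le> j \<Longrightarrow> j \<le> k \<Longrightarrow>
           prob {\<omega> \<in> space M. X k \<omega> = j} = q ^ (j - 1) / (\<Sum>i<k. q ^ i)"
begin

lemma sets_X_eq: "k \<ge> 1 \<Longrightarrow> {\<omega>\<in>space M. X k \<omega> = j} \<in> events"
  using indep measurable_sets[of "X k" M "count_space UNIV" "{j}"]
  by (auto simp: indep_vars_def vimage_def Int_def conj_commute)

lemma prob_X_all_eq:
  assumes "finite J" and "J \<subseteq> {1..}"
  shows "prob {\<omega>\<in>space M. \<forall>k\<in>J. X k \<omega> = a k} = (\<Prod>k\<in>J. prob {\<omega>\<in>space M. X k \<omega> = a k})"
proof (cases "J = {}")
  case True
  then show ?thesis by (simp add: prob_space)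
next
  case False
  have "prob {\<omega>\<in>space M. \<forall>k\<in>J. X k \<omega> = a k} = prob (\<Inter>k\<in>J. X k -` {a k} \<inter> space M)"
    using False by (intro arg_cong[where f = prob]) auto
  also have "\<dots> = (\<Prod>k\<in>J. prob (X k -` {a k} \<inter> space M))"
    using assms False by (intro indep_varsD[OF indep]) auto
  finally show ?thesis by (simp add: vimage_def Int_def conj_commute)
qed

lemma AE_X_range:
  assumes "k \<ge> 1"
  shows "AE \<omega> in M. X k \<omega> \<in> {1..k}"
proof -
  have "0 \<in> {..<k}" using assms by simp
  then have "(\<Sum>i<k. q ^ i) > 0"
    using q_pos by (intro sum_pos) auto
  moreover have "(\<Sum>j\<in>{1..k}. q ^ (j - 1)) = (\<Sum>i<k. q ^ i)"
    by (simp add: sum.atLeast1_atMost_eq)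
  ultimately have "(\<Sum>j\<in>{1..k}. prob {\<omega>\<in>space M. X k \<omega> = j}) = 1"
    using assms by (simp add: prob_X_eq sum_divide_distrib[symmetric])
  moreover have "{\<omega>\<in>space M. X k \<omega> \<in> {1..k}} = (\<Union>j\<in>{1..k}. {\<omega>\<in>space M. X k \<omega> = j})"
    by auto
  then have "prob {\<omega>\<in>space M. X k \<omega> \<in> {1..k}} = (\<Sum>j\<in>{1..k}. prob {\<omega>\<in>space M. X k \<omega> = j})"
    using sets_X_eq[OF assms]
    by (simp only:) (rule finite_measure_finite_Union; auto simp: disjoint_family_on_def)
  ultimately have "prob {\<omega>\<in>space M. X k \<omega> \<in> {1..k}} = 1" by simp
  from AE_prob_1[OF this] show ?thesis by eventually_elim auto
qed

lemma AE_mallows_proc_permutes: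
  assumes "n \<ge> 1"
  shows "AE \<omega> in M. mallows_proc (\<lambda>k. X k \<omega>) n permutes {1..n}"
proof -
  have "AE \<omega> in M. \<forall>k\<in>{2..n}. X k \<omega> \<in> {1..k}"
    by (intro AE_finite_allI AE_X_range) auto
  then show ?thesis
    by eventually_elim (rule mallows_proc_permutes[OF assms])
qed

lemma mallows_proc_event_eq:
  assumes "n \<ge> 1" and "\<pi> permutes {1..n}"
  shows "{\<omega>\<in>space M. mallows_proc (\<lambda>k. X k \<omega>) n = \<pi>}
       = {\<omega>\<in>space M. \<forall>k\<in>{2..n}. X k \<omega> = prefix_rank \<pi> k}"
  using mallows_proc_eq_iff_ranks[OF assms] by auto

lemma sets_mallows_proc_eq:
  assumes "n \<ge> 1" and "\<pi> permutes {1..n}"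
  shows "{\<omega>\<in>space M. mallows_proc (\<lambda>k. X k \<omega>) n = \<pi>} \<in> events"
  unfolding mallows_proc_event_eq[OF assms]
  by (intro sets.sets_Collect_finite_All sets_X_eq) auto

lemma prob_mallows_proc_eq:
  assumes "n \<ge> 1" and "\<pi> permutes {1..n}"
  shows "prob {\<omega>\<in>space M. mallows_proc (\<lambda>k. X k \<omega>) n = \<pi>}
       = (\<Prod>k\<in>{2..n}. q ^ (k - 1) / (\<Sum>i<k. q ^ i)) * (1 / q) ^ inv_count n \<pi>"
proof -
  have "prob {\<omega>\<in>space M. mallows_proc (\<lambda>k. X k \<omega>) n = \<pi>}
      = (\<Prod>k\<in>{2..n}. prob {\<omega>\<in>space M. X k \<omega> = prefix_rank \<pi> k})"
    unfolding mallows_proc_event_eq[OF assms] by (rule prob_X_all_eq) auto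
  also have "\<dots> = (\<Prod>k\<in>{2..n}. q ^ (prefix_rank \<pi> k - 1) / (\<Sum>i<k. q ^ i))"
    using prefix_rank_bounds by (intro prod.cong prob_X_eq) auto
  also have "\<dots> = (\<Prod>k\<in>{2..n}. q ^ (prefix_rank \<pi> k - 1)) / (\<Prod>k\<in>{2..n}. \<Sum>i<k. q ^ i)"
    by (rule prod_dividef)
  also have "\<dots> = (\<Prod>k\<in>{2..n}. q ^ (k - 1) / (\<Sum>i<k. q ^ i)) * (1 / q) ^ inv_count n \<pi>"
    using q_pos by (simp only: prod_power_prefix_rank prod_dividef) simp
  finally show ?thesis .
qed

theorem prob_mallows_proc_eq_mallows_prob:
  assumes "n \<ge> 1"
  shows "prob {\<omega>\<in>space M. mallows_proc (\<lambda>k. X k \<omega>) n = \<pi>} = mallows_prob n (1 / q) \<pi>"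
proof -
  define K where "K = (\<Prod>k\<in>{2..n}. q ^ (k - 1) / (\<Sum>i<k. q ^ i))"
  have "K * mallows_Z n (1 / q)
      = (\<Sum>\<sigma>\<in>{\<sigma>. \<sigma> permutes {1..n}}. prob {\<omega>\<in>space M. mallows_proc (\<lambda>k. X k \<omega>) n = \<sigma>})"
    by (simp add: mallows_Z_def sum_distrib_left prob_mallows_proc_eq[OF assms] K_def)
  also have "\<dots> = 1"
    using AE_mallows_proc_permutes[OF assms] sets_mallows_proc_eq[OF assms]
    by (intro sum_prob_eq_1_AE) (auto simp: finite_permutations)
  finally have KZ: "K * mallows_Z n (1 / q) = 1" .
  show ?thesis
  proof (cases "\<pi> permutes {1..n}")
    case True
    from KZ have "K = 1 / mallows_Z n (1 / q)"
      by (metis mult_eq_0_iff nonzero_eq_divide_eq zero_neq_one)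
    then show ?thesis
      using prob_mallows_proc_eq[OF assms True, folded K_def] True by (simp add: mallows_prob_def)
  next
    case False
    with AE_mallows_proc_permutes[OF assms] show ?thesis
      by (auto simp: mallows_prob_def intro!: prob_eq_0_AE elim: AE_mp)
  qed
qed

end

theorem lemma2p1:
  fixes M :: "'a measure" and X :: "nat \<Rightarrow> 'a \<Rightarrow> nat" and q :: real and n :: nat
  assumes "prob_space M"
    and "q > 0"
    and "prob_space.indep_vars M (\<lambda>_. count_space UNIV) X {1..}"
    and "\<And>k j. k \<ge> 1 \<Longrightarrow> 1 \<le> j \<Longrightarrow> j \<le> k \<Longrightarrow>
           measure M {\<omega> \<in> space M. X k \<omega> = j} = q ^ (j - 1) / (\<Sum>i<k. q ^ i)"
    and "n \<ge> 1"
  shows "\<forall>\<pi>. measure M {\<omega> \<in> space M. mallows_proc (\<lambda>k. X k \<omega>) n = \<pi>}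
               = mallows_prob n (1 / q) \<pi>"
proof -
  interpret q_mallows_values M X q
    using assms(1-4) by (simp add: q_mallows_values_def q_mallows_values_axioms_def)
  show ?thesis using prob_mallows_proc_eq_mallows_prob[OF assms(5)] by blast
qed

end
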